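(* Let $n=2m$ with $m$ a positive integer, and let $\mathbf{x}_n=(1,\dots,1)\in\mathbb{R}^n$. Then $$E(\mathbf{x}_n)\le m(1+\ln m),$$ where $E$ is as defined in the context.
   Context: For $\mathbf{x}=(x_1,\dots,x_n)\in(0,\infty)^n$, let $\mathcal{C}(\mathbf{x})$ be the configuration of $n+1$ points $P_1<\dots<P_{n+1}$ on $\mathbb{R}$ with $P_1=0$ and $P_{i+1}=P_i+x_i$, where $P_i$ is red if $i$ is odd and blue if $i$ is even. A matching $\mathcal{M}$ of this configuration is produced by the algorithm which repeatedly selects, among all pairs consisting of an unmatched blue point and an unmatched red point, a pair at minimum distance and matches them, until no further matching is possible; ties are broken at random. $D(\mathbf{x})$ is the expected value of $\sum_{P\text{ blue}}|P-\mathcal{M}(P)|$ with respect to the randomness of the algorithm. For a permutation $\pi$ of $\{1,\dots,n\}$ write $\pi(\mathbf{x})=(x_{\pi(1)},\dots,x_{\pi(n)})$, and $E(\mathbf{x})=\frac{1}{n!}\sum_\pi D(\pi(\mathbf{x}))$. *)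

theory Defs
  imports "HOL-Combinatorics.Permutations" Complex_Main
begin

text \<open>Position of point P_i (i = 1..n+1): P_1 = 0, P_(i+1) = P_i + x_i.
  The vector x is a function indexed by 1..n.\<close>
definition pos :: "(nat \<Rightarrow> real) \<Rightarrow> nat \<Rightarrow> real" where
  "pos x i = (\<Sum>j\<in>{1..<i}. x j)"

text \<open>Expected cost of the random greedy matching, starting from the sets B of
  unmatched blue indices and R of unmatched red indices, with point positions P.
  At each step a pair at minimum distance is chosen uniformly at random among all
  minimum-distance pairs. The first argument is fuel (each step removes one blue point).\<close>
primrec greedy_exp :: "(nat \<Rightarrow> real) \<Rightarrow> nat \<Rightarrow> nat set \<Rightarrow> nat set \<Rightarrow> real" where
  "greedy_exp P 0 B R = 0"
| "greedy_exp P (Suc k) B R =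
     (if B = {} \<or> R = {} then 0
      else (let d = Min {\<bar>P b - P r\<bar> | b r. b \<in> B \<and> r \<in> R};
                T = {(b, r). b \<in> B \<and> r \<in> R \<and> \<bar>P b - P r\<bar> = d}
            in (\<Sum>(b, r)\<in>T. d + greedy_exp P k (B - {b}) (R - {r})) / real (card T)))"

text \<open>D(x) for x = (x_1,...,x_n): points P_1..P_(n+1), red if index odd, blue if even.\<close>
definition Dcost :: "nat \<Rightarrow> (nat \<Rightarrow> real) \<Rightarrow> real" where
  "Dcost n x = greedy_exp (pos x) (Suc n) {i \<in> {1..Suc n}. even i} {i \<in> {1..Suc n}. odd i}"

definition Ecost :: "nat \<Rightarrow> (nat \<Rightarrow> real) \<Rightarrow> real" where
  "Ecost n x = (\<Sum>p \<in> {p. p permutes {1..n}}. Dcost n (x \<circ> p)) / fact n"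

end

theory Submission
  imports Defs "HOL-Analysis.Harmonic_Numbers"
begin

text \<open>Since all gaps equal 1, point i sits at position i - 1, and
  every permutation of the gaps gives the same configuration, so E = D. Throughout the
  greedy process the unmatched points alternate in colour red, blue, ..., blue, red
  along the line: the closest pair is adjacent among the unmatched points, and deleting
  two adjacent points keeps the pattern. If the current minimum distance is d, each of
  the k unmatched blue points owns the interval of length 2d centred at it; these
  intervals are disjoint and lie in [0, 2m], so d \<le> m / k. Summing over the m steps
  gives D \<le> m H(m) \<le> m (1 + ln m).\<close>

definition charge :: "nat set \<Rightarrow> nat set \<Rightarrow> nat \<Rightarrow> int" where
  "charge B R i = (if i \<in> R then 1 else 0) - (if i \<in> B then 1 else 0)"

definition excess :: "nat set \<Rightarrow> nat set \<Rightarrow> nat \<Rightarrow> int" where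
  "excess B R t = (\<Sum>i\<in>{..t}. charge B R i)"

text \<open>The colours of the points of B \<union> R \<subseteq> {1..2m+1}, read from left to right,
  alternate, starting and ending with red.\<close>
definition alternating :: "nat \<Rightarrow> nat set \<Rightarrow> nat set \<Rightarrow> bool" where
  "alternating m B R \<longleftrightarrow> B \<subseteq> {1..2*m+1} \<and> R \<subseteq> {1..2*m+1} \<and> B \<inter> R = {} \<and>
     (\<forall>t. excess B R t \<in> {0,1}) \<and> excess B R (2*m+1) = 1"

definition closest_pair :: "(nat \<Rightarrow> real) \<Rightarrow> nat set \<Rightarrow> nat set \<Rightarrow> nat \<Rightarrow> nat \<Rightarrow> bool" where
  "closest_pair P B R b r \<longleftrightarrow> b \<in> B \<and> r \<in> R \<and>
     (\<forall>b'\<in>B. \<forall>r'\<in>R. \<bar>P b - P r\<bar> \<le> \<bar>P b' - P r'\<bar>)"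

lemma excess_Suc: "excess B R (Suc t) = excess B R t + charge B R (Suc t)"
  by (simp add: excess_def)

lemma excess_pred: "1 \<le> t \<Longrightarrow> excess B R t = excess B R (t - 1) + charge B R t"
  using excess_Suc[of B R "t - 1"] by simp

lemma excess_eq_add_interval:
  "s \<le> t \<Longrightarrow> excess B R t = excess B R s + (\<Sum>i\<in>{s<..t}. charge B R i)"
proof (induction t rule: dec_induct)
  case (step t)
  then have "{s<..Suc t} = insert (Suc t) {s<..t}" by auto
  with step show ?case by (simp add: excess_Suc)
qed simp

lemma excess_eq_if_gap:
  assumes "s \<le> t" "\<And>i. s < i \<Longrightarrow> i \<le> t \<Longrightarrow> i \<notin> B \<and> i \<notin> R"
  shows "excess B R t = excess B R s"
proof -
  have "(\<Sum>i\<in>{s<..t}. charge B R i) = 0"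
    using assms(2) by (intro sum.neutral) (auto simp: charge_def)
  then show ?thesis using excess_eq_add_interval[OF assms(1)] by simp
qed

lemma red_point_if_charge_pos:
  assumes "finite A" "0 < (\<Sum>i\<in>A. charge B R i)"
  shows "\<exists>r\<in>R. r \<in> A"
proof (rule ccontr)
  assume "\<not> ?thesis"
  then have "(\<Sum>i\<in>A. charge B R i) \<le> 0" by (intro sum_nonpos) (auto simp: charge_def)
  with assms(2) show False by simp
qed

lemma alternating_finite: "alternating m B R \<Longrightarrow> finite B \<and> finite R"
  unfolding alternating_def using finite_subset by blast

lemma excess_blue:
  assumes A: "alternating m B R" and b: "b \<in> B"
  shows "excess B R b = 0" "excess B R (b - 1) = 1"
proof -
  have "1 \<le> b" "charge B R b = -1" using A b by (auto simp: alternating_def charge_def)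
  then have "excess B R b = excess B R (b - 1) - 1" using excess_pred by simp
  moreover have "excess B R b \<in> {0,1}" "excess B R (b - 1) \<in> {0,1}"
    using A by (auto simp: alternating_def)
  ultimately show "excess B R b = 0" "excess B R (b - 1) = 1" by auto
qed

lemma excess_red:
  assumes A: "alternating m B R" and r: "r \<in> R"
  shows "excess B R r = 1"
proof -
  have "1 \<le> r" "charge B R r = 1" using A r by (auto simp: alternating_def charge_def)
  then have "excess B R r = excess B R (r - 1) + 1" using excess_pred by simp
  moreover have "excess B R r \<in> {0,1}" "excess B R (r - 1) \<in> {0,1}"
    using A by (auto simp: alternating_def)
  ultimately show ?thesis by auto
qed

lemma red_left_of_blue:
  assumes A: "alternating m B R" and b: "b \<in> B"
  shows "\<exists>r\<in>R. r < b"
proof -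
  have "1 \<le> b" using A b by (auto simp: alternating_def)
  moreover have "0 < (\<Sum>i\<in>{..b - 1}. charge B R i)"
    using excess_blue(2)[OF A b] by (simp add: excess_def)
  ultimately obtain r where "r \<in> R" "r \<le> b - 1"
    using red_point_if_charge_pos[of "{..b - 1}" B R] by auto
  with \<open>1 \<le> b\<close> show ?thesis by (intro bexI[of _ r]) auto
qed

lemma red_right_of_blue:
  assumes A: "alternating m B R" and b: "b \<in> B"
  shows "\<exists>r\<in>R. b < r \<and> r \<le> 2*m+1"
proof -
  have "b \<le> 2*m+1" using A b by (auto simp: alternating_def)
  then have "excess B R (2*m+1) = excess B R b + (\<Sum>i\<in>{b<..2*m+1}. charge B R i)"
    by (rule excess_eq_add_interval)
  then have "0 < (\<Sum>i\<in>{b<..2*m+1}. charge B R i)"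
    using A excess_blue(1)[OF A b] by (simp add: alternating_def)
  then show ?thesis using red_point_if_charge_pos[of "{b<..2*m+1}"] by fastforce
qed

lemma red_between_blues:
  assumes A: "alternating m B R" and "b \<in> B" "b' \<in> B" "b < b'"
  shows "\<exists>r\<in>R. b < r \<and> r < b'"
proof -
  have "excess B R (b' - 1) = excess B R b + (\<Sum>i\<in>{b<..b' - 1}. charge B R i)"
    using assms(4) by (intro excess_eq_add_interval) simp
  then have "0 < (\<Sum>i\<in>{b<..b' - 1}. charge B R i)"
    using excess_blue[OF A] assms(2,3) by simp
  then show ?thesis using red_point_if_charge_pos[of "{b<..b' - 1}"] assms(4) by fastforce
qed

text \<open>The intervals [b - d, b + d) around the blue points are pairwise disjoint
  subsets of [1, 2m + 1).\<close>
lemma card_blue_mult_le: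
  assumes A: "alternating m B R"
    and d: "\<And>b r. b \<in> B \<Longrightarrow> r \<in> R \<Longrightarrow> real d \<le> \<bar>real b - real r\<bar>"
  shows "card B * d \<le> m"
proof -
  define I where "I b = {b - d ..< b + d}" for b
  have inside: "d + 1 \<le> b \<and> b + d \<le> 2*m+1" if b: "b \<in> B" for b
  proof -
    obtain r where r: "r \<in> R" "r < b" using red_left_of_blue[OF A b] by blast
    obtain r' where r': "r' \<in> R" "b < r'" "r' \<le> 2*m+1"
      using red_right_of_blue[OF A b] by blast
    have "1 \<le> r" using A r by (auto simp: alternating_def)
    with d[OF b r(1)] d[OF b r'(1)] r r' show ?thesis by linarith
  qed
  have disjoint: "I b \<inter> I b' = {}" if bb: "b \<in> B" "b' \<in> B" "b < b'" for b b'
  proof -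
    obtain r where r: "r \<in> R" "b < r" "r < b'" using red_between_blues[OF A bb] by blast
    with d[OF bb(1) r(1)] d[OF bb(2) r(1)] have "b + d \<le> b' - d" by linarith
    then show ?thesis by (auto simp: I_def)
  qed
  have "card (I b) = 2 * d" if "b \<in> B" for b
    using inside[OF that] by (simp add: I_def)
  then have "card B * (2 * d) = (\<Sum>b\<in>B. card (I b))" by simp
  also have "\<dots> = card (\<Union>b\<in>B. I b)"
    using alternating_finite[OF A] disjoint
    by (intro card_UN_disjoint[symmetric]) (auto simp: I_def, metis linorder_neqE_nat)
  also have "\<dots> \<le> card {1..<2*m+1}"
    using inside by (intro card_mono) (force simp: I_def)+
  finally show ?thesis by simp
qed

lemma closest_dist_le_div_card:
  assumes A: "alternating m B R" and cl: "closest_pair real B R b r"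
  shows "\<bar>real b - real r\<bar> \<le> real m / real (card B)"
proof -
  define d where "d = nat \<bar>int b - int r\<bar>"
  have dist: "real d = \<bar>real b - real r\<bar>" by (simp add: d_def)
  have "card B * d \<le> m"
    using cl by (intro card_blue_mult_le[OF A]) (auto simp: closest_pair_def dist)
  then have "real (card B) * \<bar>real b - real r\<bar> \<le> real m"
    by (metis dist of_nat_le_iff of_nat_mult)
  moreover have "0 < card B"
    using cl alternating_finite[OF A] by (auto simp: closest_pair_def card_gt_0_iff)
  ultimately show ?thesis by (simp add: field_simps)
qed

lemma charge_remove:
  "b \<in> B \<Longrightarrow> r \<in> R \<Longrightarrow> B \<inter> R = {} \<Longrightarrow>
   charge (B - {b}) (R - {r}) i = charge B R i - (if i = r then 1 else 0) + (if i = b then 1 else 0)"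
  by (auto simp: charge_def)

lemma excess_remove:
  "b \<in> B \<Longrightarrow> r \<in> R \<Longrightarrow> B \<inter> R = {} \<Longrightarrow>
   excess (B - {b}) (R - {r}) t = excess B R t - (if r \<le> t then 1 else 0) + (if b \<le> t then 1 else 0)"
  unfolding excess_def by (simp add: charge_remove sum.distrib sum_subtractf)

text \<open>No unmatched point lies strictly between a closest pair, so the prefix excess
  outside the pair is unchanged and inside it is that at b (namely 0, raised by one)
  or at r (namely 1, lowered by one).\<close>
lemma alternating_remove_closest_pair:
  assumes A: "alternating m B R" and cl: "closest_pair real B R b r"
  shows "alternating m (B - {b}) (R - {r})"
proof -
  have b: "b \<in> B" and r: "r \<in> R" and dj: "B \<inter> R = {}"
    using A cl by (auto simp: closest_pair_def alternating_def)
  have "b \<noteq> r" using b r dj by blast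
  have closest: "\<bar>real b - real r\<bar> \<le> \<bar>real b' - real r'\<bar>" if "b' \<in> B" "r' \<in> R" for b' r'
    using cl that by (auto simp: closest_pair_def)
  have gap: "q \<notin> B \<and> q \<notin> R" if "min b r < q" "q < max b r" for q
    using closest[OF _ r, of q] closest[OF b, of q] that \<open>b \<noteq> r\<close>
    by (cases "b < r") (auto simp: min_def max_def)
  have "excess (B - {b}) (R - {r}) t \<in> {0,1}" for t
  proof -
    consider "b \<le> t" "t < r" | "r \<le> t" "t < b" | "b \<le> t \<longleftrightarrow> r \<le> t" by linarith
    then show ?thesis
    proof cases
      case 1
      then have "excess B R t = excess B R b" using gap by (intro excess_eq_if_gap) auto
      then show ?thesis using 1 excess_remove[OF b r dj, of t] excess_blue(1)[OF A b] by simp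
    next
      case 2
      then have "excess B R t = excess B R r" using gap by (intro excess_eq_if_gap) auto
      then show ?thesis using 2 excess_remove[OF b r dj, of t] excess_red[OF A r] by simp
    next
      case 3
      then show ?thesis using A excess_remove[OF b r dj, of t] by (auto simp: alternating_def)
    qed
  qed
  moreover have "b \<le> 2*m+1" "r \<le> 2*m+1" using A b r by (auto simp: alternating_def)
  ultimately show ?thesis
    using A excess_remove[OF b r dj, of "2*m+1"] by (auto simp: alternating_def)
qed

lemma greedy_exp_Suc_le:
  assumes "finite B" "finite R" "B \<noteq> {}" "R \<noteq> {}"
    and step: "\<And>b r. closest_pair P B R b r \<Longrightarrow>
                 \<bar>P b - P r\<bar> + greedy_exp P k (B - {b}) (R - {r}) \<le> Z"
  shows "greedy_exp P (Suc k) B R \<le> Z"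
proof -
  define S where "S = {\<bar>P b - P r\<bar> | b r. b \<in> B \<and> r \<in> R}"
  define d where "d = Min S"
  define T where "T = {(b, r). b \<in> B \<and> r \<in> R \<and> \<bar>P b - P r\<bar> = d}"
  have S: "S = (\<lambda>(b, r). \<bar>P b - P r\<bar>) ` (B \<times> R)" by (auto simp: S_def)
  then have "finite S" "S \<noteq> {}" using assms(1-4) by auto
  then have "d \<in> S" and d_le: "\<And>x. x \<in> S \<Longrightarrow> d \<le> x" by (simp_all add: d_def)
  then obtain b0 r0 where "(b0, r0) \<in> T" by (auto simp: S_def T_def)
  moreover have "finite T" using assms(1,2) by (auto simp: T_def intro: finite_subset)
  ultimately have T: "0 < card T" by (auto simp: card_gt_0_iff)
  have "greedy_exp P (Suc k) B R =
      (\<Sum>(b, r)\<in>T. d + greedy_exp P k (B - {b}) (R - {r})) / real (card T)"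
    using assms(3,4) by (simp add: Let_def S_def d_def T_def)
  also have "\<dots> \<le> (\<Sum>(b, r)\<in>T. Z) / real (card T)"
  proof (intro divide_right_mono sum_mono)
    fix p assume "p \<in> T"
    moreover obtain b r where "p = (b, r)" by fastforce
    ultimately have "closest_pair P B R b r" "d = \<bar>P b - P r\<bar>"
      using d_le by (auto simp: T_def S_def closest_pair_def)
    then show "(case p of (b, r) \<Rightarrow> d + greedy_exp P k (B - {b}) (R - {r})) \<le> (case p of (b, r) \<Rightarrow> Z)"
      using step \<open>p = (b, r)\<close> by simp
  qed simp
  also have "\<dots> = Z" using T by simp
  finally show ?thesis .
qed

lemma greedy_exp_le_harm:
  assumes P: "\<And>i j. 1 \<le> i \<Longrightarrow> 1 \<le> j \<Longrightarrow> \<bar>P i - P j\<bar> = \<bar>real i - real j\<bar>"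
    and "alternating m B R"
  shows "greedy_exp P k B R \<le> real m * harm (card B)"
  using assms(2)
proof (induction k arbitrary: B R)
  case (Suc k)
  note A = Suc.prems
  show ?case
  proof (cases "B = {} \<or> R = {}")
    case False
    obtain j where j: "card B = Suc j"
      using False alternating_finite[OF A] by (metis card_0_eq not0_implies_Suc)
    show ?thesis
    proof (rule greedy_exp_Suc_le)
      fix b r assume "closest_pair P B R b r"
      moreover have "1 \<le> i" if "i \<in> B \<union> R" for i using A that by (auto simp: alternating_def)
      ultimately have cl: "closest_pair real B R b r" and "\<bar>P b - P r\<bar> = \<bar>real b - real r\<bar>"
        by (auto simp: closest_pair_def P)
      then have "\<bar>P b - P r\<bar> \<le> real m / real (card B)"
        using closest_dist_le_div_card[OF A] by simp
      moreover have "greedy_exp P k (B - {b}) (R - {r}) \<le> real m * harm j"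
        using Suc.IH[OF alternating_remove_closest_pair[OF A cl]] cl j
        by (simp add: closest_pair_def)
      ultimately show "\<bar>P b - P r\<bar> + greedy_exp P k (B - {b}) (R - {r}) \<le> real m * harm (card B)"
        using j by (simp add: harm_Suc distrib_left divide_inverse)
    qed (use False alternating_finite[OF A] in auto)
  qed (simp add: harm_nonneg)
qed (simp add: harm_nonneg)

lemma excess_initial:
  "excess {i \<in> {1..Suc (2*m)}. even i} {i \<in> {1..Suc (2*m)}. odd i} t =
     (if t \<le> 2*m+1 then int (t mod 2) else 1)"
  by (induction t) (auto simp: excess_def charge_def excess_Suc mod_Suc)

lemma alternating_initial:
  "alternating m {i \<in> {1..Suc (2*m)}. even i} {i \<in> {1..Suc (2*m)}. odd i}"
  unfolding alternating_def using excess_initial[of m] by auto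

lemma card_even_initial: "card {i \<in> {1..Suc (2*m)}. even i} = m"
proof -
  have "{i \<in> {1..Suc (2*m)}. even i} = (\<lambda>k. 2*k) ` {1..m}" by (auto elim!: evenE)
  then show ?thesis by (simp add: card_image inj_on_def)
qed

lemma Ecost_const: "Ecost n (\<lambda>_. c) = Dcost n (\<lambda>_. c)"
  by (simp add: Ecost_def comp_def card_permutations)

lemma harm_le_1_plus_ln: "0 < n \<Longrightarrow> harm n \<le> 1 + ln (real n)"
  using euler_mascheroni_sequence_decreasing[of 1 n] by (simp add: harm_def)

theorem lemmaA15:
  fixes m :: nat
  assumes "m > 0"
  shows "Ecost (2 * m) (\<lambda>_. 1) \<le> real m * (1 + ln (real m))"
proof -
  have dist: "\<bar>pos (\<lambda>_. 1) i - pos (\<lambda>_. 1) j\<bar> = \<bar>real i - real j\<bar>" if "1 \<le> i" "1 \<le> j" for i j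
    using that by (simp add: pos_def of_nat_diff)
  have "Ecost (2 * m) (\<lambda>_. 1) = Dcost (2 * m) (\<lambda>_. 1)" by (rule Ecost_const)
  also have "\<dots> \<le> real m * harm m"
    unfolding Dcost_def
    using greedy_exp_le_harm[OF dist alternating_initial, where m = m and k = "Suc (2*m)"]
      card_even_initial[of m]
    by (simp only:)
  also have "\<dots> \<le> real m * (1 + ln (real m))"
    using harm_le_1_plus_ln[OF assms] by (simp add: mult_left_mono)
  finally show ?thesis .
qed

end
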